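(* Let $X,Y$ be non-empty subsets of $A^+$. (i) If $X$ is a prefix code, $Y$ is a suffix code and $XY$ is a code, then $(X,Y)$ is a strong alternative code. (ii) If $(X,Y)$ is a strong alternative code, then $X$ is a prefix code and $Y$ is a suffix code.
   Context: $A$ is a finite alphabet, $A^*$ the set of words, $A^+$ the non-empty words, $XY=\{xy:x\in X,y\in Y\}$. For $X,Z\subseteq A^*$: $X^{-1}Z=\{u\in A^*: xu\in Z \text{ for some } x\in X\}$ and $ZY^{-1}=\{u\in A^*: uy\in Z\text{ for some } y\in Y\}$. A code is a subset of $A^+$ in which every word has at most one factorization into its elements. A prefix (suffix) code is a subset of $A^+$ in which no word is a proper prefix (suffix) of another. For non-empty $X,Y\subseteq A^+$, $(X,Y)$ is an alternative code if no word of $A^+$ admits two different similar alternative factorizations on $(X,Y)$ (factorizations $u_1\cdots u_n$, $n\ge2$, $u_i\in X\cup Y$, alternating between $X$ and $Y$; similar = beginning in the same set and ending in the same set); equivalently, $XY$ is a code and each element of $XY$ has exactly one factorization $xy$ with $x\in X,y\in Y$. An alternative code $(X,Y)$ is a strong alternative code if $X^{-1}(XY)\subseteq Y$ and $(XY)Y^{-1}\subseteq X$. *)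

theory Defs
  imports Main
begin

(* Words over alphabet 'a are lists; A^+ = nonempty lists. *)

definition conc :: "'a list set \<Rightarrow> 'a list set \<Rightarrow> 'a list set" where
  "conc X Y = {x @ y | x y. x \<in> X \<and> y \<in> Y}"

definition lquot :: "'a list set \<Rightarrow> 'a list set \<Rightarrow> 'a list set" where
  "lquot X Z = {u. \<exists>x\<in>X. x @ u \<in> Z}"

definition rquot :: "'a list set \<Rightarrow> 'a list set \<Rightarrow> 'a list set" where
  "rquot Z Y = {u. \<exists>y\<in>Y. u @ y \<in> Z}"

definition is_code :: "'a list set \<Rightarrow> bool" where
  "is_code C \<longleftrightarrow> [] \<notin> C \<and>
     (\<forall>us vs. set us \<subseteq> C \<longrightarrow> set vs \<subseteq> C \<longrightarrow> concat us = concat vs \<longrightarrow> us = vs)"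

definition prefix_code :: "'a list set \<Rightarrow> bool" where
  "prefix_code C \<longleftrightarrow> [] \<notin> C \<and>
     (\<forall>u\<in>C. \<forall>v\<in>C. \<forall>w. v = u @ w \<longrightarrow> w = [])"

definition suffix_code :: "'a list set \<Rightarrow> bool" where
  "suffix_code C \<longleftrightarrow> [] \<notin> C \<and>
     (\<forall>u\<in>C. \<forall>v\<in>C. \<forall>w. v = w @ u \<longrightarrow> w = [])"

definition alt_fact :: "'a list set \<Rightarrow> 'a list set \<Rightarrow> ('a list \<times> bool) list \<Rightarrow> bool" where
  "alt_fact X Y fs \<longleftrightarrow> length fs \<ge> 2 \<and>
     (\<forall>(u, b)\<in>set fs. if b then u \<in> X else u \<in> Y) \<and>
     (\<forall>i. Suc i < length fs \<longrightarrow> snd (fs ! Suc i) = (\<not> snd (fs ! i)))"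

definition alternative_code :: "'a list set \<Rightarrow> 'a list set \<Rightarrow> bool" where
  "alternative_code X Y \<longleftrightarrow> X \<noteq> {} \<and> Y \<noteq> {} \<and> [] \<notin> X \<and> [] \<notin> Y \<and>
     (\<forall>fs gs. alt_fact X Y fs \<longrightarrow> alt_fact X Y gs \<longrightarrow>
        concat (map fst fs) = concat (map fst gs) \<longrightarrow>
        snd (hd fs) = snd (hd gs) \<longrightarrow> snd (last fs) = snd (last gs) \<longrightarrow> fs = gs)"

definition strong_alternative_code :: "'a list set \<Rightarrow> 'a list set \<Rightarrow> bool" where
  "strong_alternative_code X Y \<longleftrightarrow> alternative_code X Y \<and>
     lquot X (conc X Y) \<subseteq> Y \<and> rquot (conc X Y) Y \<subseteq> X"

end

theory Submission
  imports Defs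
begin

text \<open>For (i), complete a factorization to one that starts in \<open>X\<close> and ends in \<open>Y\<close> by adding a
fixed \<open>x\<^sub>0 \<in> X\<close> in front and a fixed \<open>y\<^sub>0 \<in> Y\<close> at the end where needed. It then groups into
factors \<open>x y\<close> of \<open>XY\<close>; two such factorizations of one word coincide because \<open>XY\<close> is a code and,
\<open>X\<close> being a prefix code, each element of \<open>XY\<close> splits uniquely as \<open>x y\<close>. For (ii), if \<open>v = u w\<close> with
\<open>u, v \<in> X\<close>, then \<open>w y\<^sub>0 \<in> X\<^sup>-\<^sup>1(XY) \<subseteq> Y\<close>, so \<open>(v)(y\<^sub>0) = (u)(w y\<^sub>0)\<close> are two similar alternative
factorizations, forcing \<open>w = []\<close>; symmetrically for \<open>Y\<close>.\<close>

lemma prefix_code_append_eq_append: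
  assumes "prefix_code X" "x \<in> X" "x' \<in> X" "x @ y = x' @ y'"
  shows "x = x'"
  using assms(4) unfolding append_eq_append_conv2
  using assms(1-3) unfolding prefix_code_def by blast

lemma suffix_code_append_eq_append:
  assumes "suffix_code Y" "y \<in> Y" "y' \<in> Y" "x @ y = x' @ y'"
  shows "y = y'"
  using assms(4) unfolding append_eq_append_conv2
  using assms(1-3) unfolding suffix_code_def by (metis append_Nil)

lemma prefix_code_inj_on_append: "prefix_code X \<Longrightarrow> inj_on (\<lambda>(x, y). x @ y) (X \<times> Y)"
  by (auto intro!: inj_onI dest: prefix_code_append_eq_append)

lemma lquot_conc_subset: "prefix_code X \<Longrightarrow> lquot X (conc X Y) \<subseteq> Y"
  unfolding lquot_def conc_def by (auto dest: prefix_code_append_eq_append)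

lemma rquot_conc_subset: "suffix_code Y \<Longrightarrow> rquot (conc X Y) Y \<subseteq> X"
  unfolding rquot_def conc_def by (auto dest: suffix_code_append_eq_append)

lemma alt_fact_iff_successively:
  "alt_fact X Y fs \<longleftrightarrow> length fs \<ge> 2 \<and> (\<forall>(u, b)\<in>set fs. if b then u \<in> X else u \<in> Y)
     \<and> successively (\<lambda>a b. snd b = (\<not> snd a)) fs"
  unfolding alt_fact_def successively_conv_nth by blast

lemma alt_fact_pair: "alt_fact X Y [(x, True), (y, False)] \<longleftrightarrow> x \<in> X \<and> y \<in> Y"
  by (simp add: alt_fact_iff_successively)

definition xy_factors :: "('w \<times> 'w) list \<Rightarrow> ('w \<times> bool) list" where
  "xy_factors ps = concat (map (\<lambda>(x, y). [(x, True), (y, False)]) ps)"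

lemma xy_factors_simps [simp]:
  "xy_factors [] = []"
  "xy_factors ((x, y) # ps) = (x, True) # (y, False) # xy_factors ps"
  by (simp_all add: xy_factors_def)

lemma concat_xy_factors: "concat (map fst (xy_factors ps)) = concat (map (\<lambda>(x, y). x @ y) ps)"
proof (induction ps)
  case (Cons p ps)
  then show ?case by (cases p) simp
qed simp

lemma set_xy_factors_subset_iff:
  "(\<forall>(u, b)\<in>set (xy_factors ps). if b then u \<in> X else u \<in> Y) \<longleftrightarrow> set ps \<subseteq> X \<times> Y"
proof (induction ps)
  case (Cons p ps)
  then show ?case by (cases p) simp
qed simp

lemma successively_alternating_eq_xy_factors:
  assumes "successively (\<lambda>a b. snd b = (\<not> snd a)) fs" "fs \<noteq> []" "snd (hd fs)" "\<not> snd (last fs)"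
  shows "\<exists>ps. fs = xy_factors ps"
  using assms
proof (induction fs rule: induct_list012)
  case (3 a b zs)
  obtain ps where "zs = xy_factors ps"
  proof (cases "zs = []")
    case True
    then show ?thesis using that[of "[]"] by simp
  next
    case False
    with "3.prems" show ?thesis using that "3.IH" by (auto simp: successively_Cons)
  qed
  moreover have "a = (fst a, True)" "b = (fst b, False)"
    using "3.prems" by (simp_all add: prod_eq_iff)
  ultimately have "a # b # zs = xy_factors ((fst a, fst b) # ps)" by simp
  then show ?case by blast
qed auto

definition pad_factorization :: "'w \<Rightarrow> 'w \<Rightarrow> ('w \<times> bool) list \<Rightarrow> ('w \<times> bool) list" where
  "pad_factorization x y fs =
     (if snd (hd fs) then [] else [(x, True)]) @ fs @ (if snd (last fs) then [(y, False)] else [])"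

lemma pad_factorization_cancel:
  assumes "pad_factorization x y fs = pad_factorization x y gs"
    "snd (hd fs) = snd (hd gs)" "snd (last fs) = snd (last gs)"
  shows "fs = gs"
  using assms(1) unfolding pad_factorization_def assms(2,3)
  by (simp only: same_append_eq append_same_eq)

lemma pad_factorization_eq_xy_factors:
  assumes "alt_fact X Y fs" "x \<in> X" "y \<in> Y"
  shows "\<exists>ps. set ps \<subseteq> X \<times> Y \<and> pad_factorization x y fs = xy_factors ps"
proof -
  let ?P = "\<lambda>a b. snd b = (\<not> snd a)"
  let ?fs = "pad_factorization x y fs"
  from assms(1) have ne: "fs \<noteq> []" and alt: "successively ?P fs"
    and valid: "\<forall>(u, b)\<in>set fs. if b then u \<in> X else u \<in> Y"
    by (auto simp: alt_fact_iff_successively)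
  have "successively ?P ?fs"
    using alt ne by (auto simp: pad_factorization_def successively_append_iff)
  moreover have "?fs \<noteq> []" "snd (hd ?fs)" "\<not> snd (last ?fs)"
    using ne by (auto simp: pad_factorization_def)
  ultimately obtain ps where ps: "?fs = xy_factors ps"
    using successively_alternating_eq_xy_factors by blast
  have "\<forall>(u, b)\<in>set ?fs. if b then u \<in> X else u \<in> Y"
    using valid assms(2,3) by (auto simp: pad_factorization_def)
  with ps show ?thesis by (auto simp: set_xy_factors_subset_iff)
qed

lemma alternative_code_if_prefix_code:
  assumes "X \<noteq> {}" "Y \<noteq> {}" "[] \<notin> Y" "prefix_code X" "is_code (conc X Y)"
  shows "alternative_code X Y"
  unfolding alternative_code_def
proof (intro conjI allI impI)
  show "[] \<notin> X" using assms(4) by (simp add: prefix_code_def)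
  fix fs gs
  assume fs: "alt_fact X Y fs" and gs: "alt_fact X Y gs"
    and word: "concat (map fst fs) = concat (map fst gs)"
    and hd: "snd (hd fs) = snd (hd gs)" and last: "snd (last fs) = snd (last gs)"
  obtain x y where xy: "x \<in> X" "y \<in> Y" using assms(1,2) by blast
  obtain ps qs where ps: "set ps \<subseteq> X \<times> Y" "pad_factorization x y fs = xy_factors ps"
    and qs: "set qs \<subseteq> X \<times> Y" "pad_factorization x y gs = xy_factors qs"
    using pad_factorization_eq_xy_factors[OF fs xy] pad_factorization_eq_xy_factors[OF gs xy]
    by blast
  let ?prod = "map (\<lambda>(x, y). x @ y)"
  have "concat (map fst (pad_factorization x y fs)) = concat (map fst (pad_factorization x y gs))"
    using word hd last by (simp add: pad_factorization_def)
  then have "concat (?prod ps) = concat (?prod qs)"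
    using ps(2) qs(2) by (simp add: concat_xy_factors)
  moreover have "set (?prod ps) \<subseteq> conc X Y" "set (?prod qs) \<subseteq> conc X Y"
    using ps(1) qs(1) by (auto simp: conc_def)
  ultimately have prod: "?prod ps = ?prod qs"
    using assms(5) unfolding is_code_def by blast
  have "inj_on (\<lambda>(x, y). x @ y) (set ps \<union> set qs)"
    using ps(1) qs(1) by (auto intro: inj_on_subset[OF prefix_code_inj_on_append[OF assms(4)]])
  with prod have "ps = qs" using inj_on_map_eq_map by blast
  with ps(2) qs(2) have "pad_factorization x y fs = pad_factorization x y gs" by simp
  then show "fs = gs" using hd last by (rule pad_factorization_cancel)
qed (use assms in auto)

lemma alternative_code_append_eq_append:
  assumes "alternative_code X Y" "x \<in> X" "y \<in> Y" "x' \<in> X" "y' \<in> Y" "x @ y = x' @ y'"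
  shows "x = x' \<and> y = y'"
proof -
  have unique: "\<And>fs gs. alt_fact X Y fs \<Longrightarrow> alt_fact X Y gs \<Longrightarrow>
      concat (map fst fs) = concat (map fst gs) \<Longrightarrow>
      snd (hd fs) = snd (hd gs) \<Longrightarrow> snd (last fs) = snd (last gs) \<Longrightarrow> fs = gs"
    using assms(1) unfolding alternative_code_def by blast
  have "[(x, True), (y, False)] = [(x', True), (y', False)]"
    by (rule unique) (use assms(2-6) in \<open>simp_all add: alt_fact_pair\<close>)
  then show ?thesis by simp
qed

lemma prefix_code_if_strong_alternative_code:
  assumes "strong_alternative_code X Y"
  shows "prefix_code X"
  unfolding prefix_code_def
proof (intro conjI ballI allI impI)
  from assms have ac: "alternative_code X Y" and lq: "lquot X (conc X Y) \<subseteq> Y"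
    by (auto simp: strong_alternative_code_def)
  then show "[] \<notin> X" by (simp add: alternative_code_def)
  obtain y where y: "y \<in> Y" using ac by (auto simp: alternative_code_def)
  fix u v w assume u: "u \<in> X" and v: "v \<in> X" and vuw: "v = u @ w"
  have "v @ y \<in> conc X Y" using v y by (auto simp: conc_def)
  with u vuw lq have "w @ y \<in> Y" by (auto simp: lquot_def)
  with ac u v y vuw have "v = u"
    using alternative_code_append_eq_append[of X Y v y u "w @ y"] by simp
  with vuw show "w = []" by simp
qed

lemma suffix_code_if_strong_alternative_code:
  assumes "strong_alternative_code X Y"
  shows "suffix_code Y"
  unfolding suffix_code_def
proof (intro conjI ballI allI impI)
  from assms have ac: "alternative_code X Y" and rq: "rquot (conc X Y) Y \<subseteq> X"
    by (auto simp: strong_alternative_code_def)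
  then show "[] \<notin> Y" by (simp add: alternative_code_def)
  obtain x where x: "x \<in> X" using ac by (auto simp: alternative_code_def)
  fix u v w assume u: "u \<in> Y" and v: "v \<in> Y" and vwu: "v = w @ u"
  have "x @ v \<in> conc X Y" using x v by (auto simp: conc_def)
  with u vwu have "x @ w \<in> rquot (conc X Y) Y" unfolding rquot_def by force
  with rq have "x @ w \<in> X" by blast
  with ac u v x vwu have "x = x @ w"
    using alternative_code_append_eq_append[of X Y x v "x @ w" u] by simp
  then show "w = []" by simp
qed

theorem propositionP:
  fixes X Y :: "('a::finite) list set"
  assumes "X \<noteq> {}" and "Y \<noteq> {}" and "[] \<notin> X" and "[] \<notin> Y"
  shows "(prefix_code X \<and> suffix_code Y \<and> is_code (conc X Y) \<longrightarrow> strong_alternative_code X Y)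
     \<and> (strong_alternative_code X Y \<longrightarrow> prefix_code X \<and> suffix_code Y)"
proof (rule conjI; intro impI)
  assume "prefix_code X \<and> suffix_code Y \<and> is_code (conc X Y)"
  then have "prefix_code X" "suffix_code Y" "is_code (conc X Y)" by simp_all
  with assms show "strong_alternative_code X Y"
    by (simp add: strong_alternative_code_def alternative_code_if_prefix_code
        lquot_conc_subset rquot_conc_subset)
next
  assume "strong_alternative_code X Y"
  then show "prefix_code X \<and> suffix_code Y"
    using prefix_code_if_strong_alternative_code suffix_code_if_strong_alternative_code by blast
qed

end
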